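(* Let $\{W_t\}_{t\ge0}$ be a standard Brownian motion and let $\{\phi_s\}_{s\ge0}$ be a deterministic function (the functional model parameter). For an initial term-structure density $\{\rho_s\}_{s\ge0}$ ($\rho_s=-\partial_sP_{0s}>0$, $\int_0^\infty\rho_s\,\mathrm ds=1$), consider the Flesaker–Hughston model based on the GBM family $M_{ts}=\exp(\phi_sW_t-\tfrac12\phi_s^2t)$, with bond prices $$P_{tT}=\frac{\int_T^\infty\rho_s\exp(\phi_sW_t-\frac12\phi_s^2t)\,\mathrm ds}{\int_t^\infty\rho_s\exp(\phi_sW_t-\frac12\phi_s^2t)\,\mathrm ds},$$ and define $$\Phi_{tT}=\frac{\int_T^\infty\phi_s\rho_s\exp(\phi_sW_t-\frac12\phi_s^2t)\,\mathrm ds}{\int_T^\infty\rho_s\exp(\phi_sW_t-\frac12\phi_s^2t)\,\mathrm ds},\qquad \Phi_{tt}=\lim_{s\to t}\Phi_{st},$$ the bond volatility $\Omega_{tT}=\Phi_{tT}-\Phi_{tt}$, the market price of risk $\lambda_t=-\Phi_{tt}$, and the risk premium $\lambda_t\Omega_{tT}=\Phi_{tt}(\Phi_{tt}-\Phi_{tT})$. Assume that for any admissible initial term-structure density $\{\rho_s\}$ the risk premium is positive for all $0\le t<T$. Then $\{\phi_t\}$ must be either positive and decreasing, or negative and increasing.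
   Context: An admissible initial term-structure density is a function $\rho_s=-\partial_sP_{0s}$ arising from an initial discount bond curve $\{P_{0s}\}$ with positive initial interest rates and $\lim_{s\to\infty}P_{0s}=0$; thus $\rho_s>0$ and $\int_0^\infty\rho_s\,\mathrm ds=1$. *)

theory Defs
  imports "HOL-Analysis.Analysis"
begin

definition admissible_density :: "(real \<Rightarrow> real) \<Rightarrow> bool" where
  "admissible_density \<rho> \<longleftrightarrow>
     (\<exists>P :: real \<Rightarrow> real.
        P 0 = 1 \<and>
        (\<forall>s\<ge>0. (P has_real_derivative - \<rho> s) (at s within {0..})) \<and>
        (\<forall>s\<ge>0. \<rho> s > 0) \<and>
        (P \<longlongrightarrow> 0) at_top)"

text \<open>GBM family M_{ts} = exp(phi_s W_t - phi_s^2 t / 2), with W_t = w.\<close>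
definition gbmM :: "(real \<Rightarrow> real) \<Rightarrow> real \<Rightarrow> real \<Rightarrow> real \<Rightarrow> real" where
  "gbmM \<phi> t w s = exp (\<phi> s * w - (\<phi> s)\<^sup>2 * t / 2)"

definition bondP :: "(real \<Rightarrow> real) \<Rightarrow> (real \<Rightarrow> real) \<Rightarrow> real \<Rightarrow> real \<Rightarrow> real \<Rightarrow> real" where
  "bondP \<phi> \<rho> t w T =
     integral {T..} (\<lambda>s. \<rho> s * gbmM \<phi> t w s) / integral {t..} (\<lambda>s. \<rho> s * gbmM \<phi> t w s)"

definition PhiFH :: "(real \<Rightarrow> real) \<Rightarrow> (real \<Rightarrow> real) \<Rightarrow> real \<Rightarrow> real \<Rightarrow> real \<Rightarrow> real" where
  "PhiFH \<phi> \<rho> t w T =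
     integral {T..} (\<lambda>s. \<phi> s * \<rho> s * gbmM \<phi> t w s) / integral {T..} (\<lambda>s. \<rho> s * gbmM \<phi> t w s)"

text \<open>Bond volatility, market price of risk and risk premium (Phi_{tt} = PhiFH at T = t).\<close>
definition bond_vol where
  "bond_vol \<phi> \<rho> t w T = PhiFH \<phi> \<rho> t w T - PhiFH \<phi> \<rho> t w t"

definition mpr where
  "mpr \<phi> \<rho> t w = - PhiFH \<phi> \<rho> t w t"

definition risk_premium where
  "risk_premium \<phi> \<rho> t w T = mpr \<phi> \<rho> t w * bond_vol \<phi> \<rho> t w T"

definition model_wd :: "(real \<Rightarrow> real) \<Rightarrow> (real \<Rightarrow> real) \<Rightarrow> real \<Rightarrow> real \<Rightarrow> bool" where
  "model_wd \<phi> \<rho> t w \<longleftrightarrow>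
     (\<lambda>s. \<rho> s * gbmM \<phi> t w s) absolutely_integrable_on {t..} \<and>
     (\<lambda>s. \<phi> s * \<rho> s * gbmM \<phi> t w s) absolutely_integrable_on {t..}"

end

(*
  Phi_tT is the average of phi over [T, oo) with respect to the weights rho_s M_ts, and
  Phi_tt, the average over [t, oo), is a mediant of the averages over [t, T] and [T, oo).
  Suppose phi <= m on [a, T] for some m > 0 but phi(b) > m at some b > T. Adding a heavy
  bump near b to the density exp(-s) makes the tail average Phi_aT (in the state W_a = 0)
  exceed m; then Phi_aa < Phi_aT while Phi_aa > 0, so the risk premium
  Phi_aa (Phi_aa - Phi_aT) is negative. With the continuity of phi this gives
  phi(b) <= max(0, phi(s)) whenever 0 <= s <= b, and, as the model is invariant under
  (phi, W) -> (-phi, -W), also phi(b) >= min(0, phi(s)). A zero of phi would thus force phi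
  to vanish from there on, making the premium zero; so phi has no zeros, has constant sign
  by continuity, and is monotone in the stated direction.
*)

theory Submission
  imports Defs
begin

lemma continuous_on_nonvanishing_sign:
  fixes f :: "'a::topological_space \<Rightarrow> real"
  assumes "connected S" "continuous_on S f" "\<And>x. x \<in> S \<Longrightarrow> f x \<noteq> 0"
  shows "(\<forall>x\<in>S. 0 < f x) \<or> (\<forall>x\<in>S. f x < 0)"
proof (rule ccontr)
  assume "\<not> ?thesis"
  then obtain x y where "x \<in> S" "y \<in> S" "f x < 0" "0 < f y"
    using assms(3) by (metis linorder_neqE_linordered_idom)
  moreover have "connected (f ` S)"
    using assms(2,1) by (rule connected_continuous_image)
  ultimately have "0 \<in> f ` S"
    unfolding connected_iff_interval by (meson image_eqI less_imp_le)
  then show False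
    using assms(3) by force
qed

lemma abs_mult_exp_neg_square_le:
  fixes t x :: real
  assumes "0 < t"
  shows "\<bar>x\<bar> * exp (- (x\<^sup>2 * t / 2)) \<le> 1 + 1 / t"
proof -
  have "2 * (t * \<bar>x\<bar>) \<le> 1 + (t * \<bar>x\<bar>)\<^sup>2"
    using zero_le_power2[of "t * \<bar>x\<bar> - 1"] by (simp add: power2_eq_square algebra_simps)
  then have "\<bar>x\<bar> \<le> 1 / (2 * t) + x\<^sup>2 * t / 2"
    using assms by (simp add: field_simps power2_eq_square)
  also have "\<dots> \<le> (1 + 1 / t) * (1 + x\<^sup>2 * t / 2)"
  proof -
    have "(1 + 1 / t) * (1 + x\<^sup>2 * t / 2) = 1 + 1 / t + x\<^sup>2 * t / 2 + x\<^sup>2 / 2"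
      using assms by (simp add: field_simps)
    moreover have "1 / (2 * t) \<le> 1 / t"
      using assms by (simp add: frac_le)
    ultimately show ?thesis
      using zero_le_power2[of x] by linarith
  qed
  also have "\<dots> \<le> (1 + 1 / t) * exp (x\<^sup>2 * t / 2)"
    using assms by (intro mult_left_mono exp_ge_add_one_self) auto
  finally show ?thesis
    by (simp add: exp_minus field_simps)
qed

lemma mediant_less_right:
  fixes N\<^sub>1 N\<^sub>2 D\<^sub>1 D\<^sub>2 m :: real
  assumes "0 < D\<^sub>1" "0 < D\<^sub>2" "N\<^sub>1 \<le> m * D\<^sub>1" "m * D\<^sub>2 < N\<^sub>2"
  shows "(N\<^sub>1 + N\<^sub>2) / (D\<^sub>1 + D\<^sub>2) < N\<^sub>2 / D\<^sub>2"
proof -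
  have "N\<^sub>1 * D\<^sub>2 \<le> m * D\<^sub>1 * D\<^sub>2"
    using assms(2,3) by (simp add: mult_right_mono)
  also have "\<dots> < N\<^sub>2 * D\<^sub>1"
    using assms(1,4) by (simp add: mult.commute mult.left_commute)
  finally show ?thesis
    using assms(1,2) by (simp add: field_simps)
qed

lemma bump_in_superlevel_set:
  fixes f :: "real \<Rightarrow> real"
  assumes cont: "continuous_on {0..} f" and "0 < b" "m < f b"
  obtains \<beta> :: "real \<Rightarrow> real" and R :: real where "continuous_on UNIV \<beta>" "\<And>s. 0 \<le> \<beta> s"
    "\<And>s. \<beta> s \<le> exp R * exp (- s)" "0 < \<beta> b" "b < R" "\<And>s. R \<le> s \<Longrightarrow> \<beta> s = 0"
    "\<And>s. 0 < \<beta> s \<Longrightarrow> m < f s"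
proof -
  obtain \<delta> where "0 < \<delta>" and \<delta>: "\<And>x. x \<in> {0..} \<Longrightarrow> dist x b < \<delta> \<Longrightarrow> dist (f x) (f b) < f b - m"
    using cont \<open>0 < b\<close> \<open>m < f b\<close> unfolding continuous_on_iff
    by (metis atLeast_iff diff_gt_0_iff_gt less_imp_le)
  define r where "r = min \<delta> b"
  have "0 < r"
    using \<open>0 < \<delta>\<close> \<open>0 < b\<close> by (simp add: r_def)
  define \<beta> where "\<beta> s = max 0 (1 - \<bar>s - b\<bar> / r)" for s
  show thesis
  proof (rule that[of \<beta> "b + r"])
    show "continuous_on UNIV \<beta>"
      unfolding \<beta>_def using \<open>0 < r\<close> by (auto intro!: continuous_intros)
    show "0 \<le> \<beta> s" for s
      by (simp add: \<beta>_def)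
    show "0 < \<beta> b" "b < b + r"
      using \<open>0 < r\<close> by (simp_all add: \<beta>_def)
    show support: "\<beta> s = 0" if "b + r \<le> s" for s
      using that \<open>0 < r\<close> by (simp add: \<beta>_def field_simps)
    show "\<beta> s \<le> exp (b + r) * exp (- s)" for s
    proof (cases "b + r \<le> s")
      case False
      then have "1 \<le> exp (b + r) * exp (- s)"
        by (simp flip: exp_add)
      moreover have "0 \<le> \<bar>s - b\<bar> / r"
        using \<open>0 < r\<close> by simp
      ultimately show ?thesis
        by (simp add: \<beta>_def)
    qed (simp add: support)
    show "m < f s" if "0 < \<beta> s" for s
    proof -
      have "\<bar>s - b\<bar> / r < 1"
        using that by (simp add: \<beta>_def)
      then have "\<bar>s - b\<bar> < r"
        using \<open>0 < r\<close> by (simp add: divide_less_eq)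
      then have "dist (f s) (f b) < f b - m"
        using \<delta>[of s] by (auto simp: r_def dist_real_def)
      then show ?thesis
        by (simp add: dist_real_def)
    qed
  qed
qed

lemma absolutely_integrable_on_atLeast_exp_bound:
  fixes f :: "real \<Rightarrow> real"
  assumes "continuous_on {x..} f" "\<And>s. x \<le> s \<Longrightarrow> \<bar>f s\<bar> \<le> M * exp (- s)"
  shows "f absolutely_integrable_on {x..}"
proof (rule measurable_bounded_by_integrable_imp_absolutely_integrable)
  show "f \<in> borel_measurable (lebesgue_on {x..})"
    using assms(1) by (rule continuous_imp_measurable_on_sets_lebesgue) simp
  have "(\<lambda>s. exp (- 1 * s)) integrable_on {x..}"
    by (rule integrable_on_exp_minus_to_infinity) simp
  then show "(\<lambda>s. M * exp (- s)) integrable_on {x..}"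
    using integrable_on_mult_right[of "\<lambda>s. exp (- s)" "{x..}" M] by simp
qed (use assms(2) in auto)

lemma integral_atLeast_less:
  fixes f g :: "real \<Rightarrow> real"
  assumes "f integrable_on {x..}" "g integrable_on {x..}"
    and "continuous_on {x..} f" "continuous_on {x..} g"
    and "\<And>s. x \<le> s \<Longrightarrow> f s \<le> g s" "x \<le> b" "f b < g b"
  shows "integral {x..} f < integral {x..} g"
proof -
  let ?h = "\<lambda>s. g s - f s"
  have cont: "continuous_on {x..b + 1} ?h"
    using assms(3,4) by (intro continuous_intros) (auto elim: continuous_on_subset)
  have "integral {x..b + 1} ?h \<noteq> 0"
    using integral_eq_0_iff[OF cont] assms(5-7) by fastforce
  moreover have "0 \<le> integral {x..b + 1} ?h"
    using assms(5) by (intro integral_nonneg integrable_continuous_interval cont) auto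
  moreover have "integral {x..b + 1} ?h \<le> integral {x..} ?h"
    using assms(1,2,5) by (intro integral_subset_le integrable_continuous_interval cont integrable_diff) auto
  ultimately show ?thesis
    using assms(1,2) by (simp add: integral_diff)
qed

lemma integral_atLeast_split:
  fixes f :: "real \<Rightarrow> real"
  assumes "a \<le> T" "f integrable_on {a..T}" "f integrable_on {T..}"
  shows "integral {a..} f = integral {a..T} f + integral {T..} f"
proof -
  have "(f has_integral integral {a..T} f + integral {T..} f) ({a..T} \<union> {T..})"
    using assms by (intro has_integral_Un) (auto simp: integrable_integral max_absorb2)
  moreover have "{a..T} \<union> {T..} = {a..}"
    using assms(1) by auto
  ultimately show ?thesis
    by (simp add: integral_unique)
qed

lemma integral_lincomb_divide:
  fixes f g :: "'a::euclidean_space \<Rightarrow> real"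
  assumes "f integrable_on S" "g integrable_on S"
  shows "integral S (\<lambda>s. (f s + c * g s) / Z) = (integral S f + c * integral S g) / Z"
  using assms by (simp add: integral_add integrable_on_mult_right)

definition model_mass :: "(real \<Rightarrow> real) \<Rightarrow> (real \<Rightarrow> real) \<Rightarrow> real \<Rightarrow> real \<Rightarrow> real set \<Rightarrow> real" where
  "model_mass \<phi> \<rho> t w S = integral S (\<lambda>s. \<rho> s * gbmM \<phi> t w s)"

definition model_moment :: "(real \<Rightarrow> real) \<Rightarrow> (real \<Rightarrow> real) \<Rightarrow> real \<Rightarrow> real \<Rightarrow> real set \<Rightarrow> real" where
  "model_moment \<phi> \<rho> t w S = integral S (\<lambda>s. \<phi> s * \<rho> s * gbmM \<phi> t w s)"

lemma PhiFH_eq_moment_div_mass: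
  "PhiFH \<phi> \<rho> t w T = model_moment \<phi> \<rho> t w {T..} / model_mass \<phi> \<rho> t w {T..}"
  by (simp add: PhiFH_def model_moment_def model_mass_def)

lemma gbmM_pos: "0 < gbmM \<phi> t w s"
  by (simp add: gbmM_def)

lemma gbmM_state_zero_bounds:
  assumes "0 < t"
  shows "gbmM \<phi> t 0 s \<le> 1" "\<bar>\<phi> s\<bar> * gbmM \<phi> t 0 s \<le> 1 + 1 / t"
  using assms abs_mult_exp_neg_square_le[OF assms, of "\<phi> s"] by (simp_all add: gbmM_def)

lemma continuous_on_gbmM [continuous_intros]:
  "continuous_on S \<phi> \<Longrightarrow> continuous_on S (gbmM \<phi> t w)"
  unfolding gbmM_def by (intro continuous_intros) auto

text \<open>At a positive time the Gaussian factor \<open>exp (- \<phi>\<^sup>2 t / 2)\<close> keeps both \<open>M\<close> and \<open>\<phi> M\<close>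
  bounded, whatever \<open>\<phi>\<close> is.\<close>

lemma model_wd_state_zero:
  assumes "0 < t" "continuous_on {t..} \<phi>" "\<rho> absolutely_integrable_on {t..}"
  shows "model_wd \<phi> \<rho> t 0"
proof -
  have bounded_times_\<rho>: "(\<lambda>s. f s * \<rho> s) absolutely_integrable_on {t..}"
    if "continuous_on {t..} f" "\<And>s. \<bar>f s\<bar> \<le> C" for f :: "real \<Rightarrow> real" and C
  proof (rule absolutely_integrable_bounded_measurable_product_real)
    show "f \<in> borel_measurable (lebesgue_on {t..})"
      using that(1) by (rule continuous_imp_measurable_on_sets_lebesgue) simp
    show "bounded (f ` {t..})"
      using that(2) by (auto simp: bounded_iff)
  qed (use assms(3) in auto)
  note bounds = gbmM_pos[of \<phi> t 0] gbmM_state_zero_bounds[OF assms(1), of \<phi>]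
  have "(\<lambda>s. gbmM \<phi> t 0 s * \<rho> s) absolutely_integrable_on {t..}"
    by (rule bounded_times_\<rho>[where C = 1])
      (use assms(2) bounds in \<open>auto simp: abs_of_pos intro: continuous_intros\<close>)
  moreover have "(\<lambda>s. (\<phi> s * gbmM \<phi> t 0 s) * \<rho> s) absolutely_integrable_on {t..}"
    by (rule bounded_times_\<rho>[where C = "1 + 1 / t"])
      (use assms(2) bounds in \<open>auto simp: abs_mult abs_of_pos intro: continuous_intros\<close>)
  ultimately show ?thesis
    by (simp add: model_wd_def mult_ac)
qed

corollary model_wd_state_zero_exp_bound:
  assumes "0 < t" "continuous_on {t..} \<phi>" "continuous_on {t..} \<rho>" "\<And>s. t \<le> s \<Longrightarrow> \<bar>\<rho> s\<bar> \<le> C * exp (- s)"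
  shows "model_wd \<phi> \<rho> t 0"
  using assms by (intro model_wd_state_zero absolutely_integrable_on_atLeast_exp_bound)

lemma model_wd_integrable_on:
  assumes "model_wd \<phi> \<rho> t w" "S \<subseteq> {t..}" "S \<in> sets lebesgue"
  shows "(\<lambda>s. \<rho> s * gbmM \<phi> t w s) integrable_on S"
    and "(\<lambda>s. \<phi> s * \<rho> s * gbmM \<phi> t w s) integrable_on S"
  using assms set_integrable_subset[of lebesgue "{t..}" _ S]
  by (auto simp: model_wd_def intro: set_lebesgue_integral_eq_integral(1))

lemma
  fixes \<rho>\<^sub>1 \<rho>\<^sub>2 :: "real \<Rightarrow> real" and c Z :: real
  defines "\<rho> \<equiv> \<lambda>s. (\<rho>\<^sub>1 s + c * \<rho>\<^sub>2 s) / Z"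
  assumes wd: "model_wd \<phi> \<rho>\<^sub>1 t w" "model_wd \<phi> \<rho>\<^sub>2 t w"
  shows model_wd_lincomb: "model_wd \<phi> \<rho> t w"
    and model_mass_lincomb: "S \<subseteq> {t..} \<Longrightarrow> S \<in> sets lebesgue \<Longrightarrow>
      model_mass \<phi> \<rho> t w S = (model_mass \<phi> \<rho>\<^sub>1 t w S + c * model_mass \<phi> \<rho>\<^sub>2 t w S) / Z"
    and model_moment_lincomb: "S \<subseteq> {t..} \<Longrightarrow> S \<in> sets lebesgue \<Longrightarrow>
      model_moment \<phi> \<rho> t w S = (model_moment \<phi> \<rho>\<^sub>1 t w S + c * model_moment \<phi> \<rho>\<^sub>2 t w S) / Z"
proof -
  have split: "(\<lambda>s. \<rho> s * gbmM \<phi> t w s)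
      = (\<lambda>s. (\<rho>\<^sub>1 s * gbmM \<phi> t w s + c * (\<rho>\<^sub>2 s * gbmM \<phi> t w s)) / Z)"
    "(\<lambda>s. \<phi> s * \<rho> s * gbmM \<phi> t w s)
      = (\<lambda>s. (\<phi> s * \<rho>\<^sub>1 s * gbmM \<phi> t w s + c * (\<phi> s * \<rho>\<^sub>2 s * gbmM \<phi> t w s)) / Z)"
    by (simp_all add: \<rho>_def fun_eq_iff algebra_simps add_divide_distrib)
  show "model_wd \<phi> \<rho> t w"
    using wd unfolding model_wd_def split by auto
  assume "S \<subseteq> {t..}" "S \<in> sets lebesgue"
  note integrable = model_wd_integrable_on[OF wd(1) this] model_wd_integrable_on[OF wd(2) this]
  show "model_mass \<phi> \<rho> t w S = (model_mass \<phi> \<rho>\<^sub>1 t w S + c * model_mass \<phi> \<rho>\<^sub>2 t w S) / Z"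
    unfolding model_mass_def split(1) using integrable(1,3) by (rule integral_lincomb_divide)
  show "model_moment \<phi> \<rho> t w S = (model_moment \<phi> \<rho>\<^sub>1 t w S + c * model_moment \<phi> \<rho>\<^sub>2 t w S) / Z"
    unfolding model_moment_def split(2) using integrable(2,4) by (rule integral_lincomb_divide)
qed

lemma admissible_density_exp_plus_bump:
  fixes g :: "real \<Rightarrow> real"
  assumes g: "continuous_on UNIV g" "\<And>s. 0 \<le> g s" "\<And>s. R \<le> s \<Longrightarrow> g s = 0" and "0 \<le> R"
  shows "0 < 1 + integral {0..R} g" and "admissible_density (\<lambda>s. (exp (- s) + g s) / (1 + integral {0..R} g))"
proof -
  define Z where "Z = 1 + integral {0..R} g"
  have "0 \<le> integral {0..R} g"
    using g by (intro integral_nonneg integrable_continuous_interval continuous_on_subset[OF g(1)]) auto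
  then show "0 < Z"
    by (simp add: Z_def)
  define P where "P s = (exp (- s) + integral {0..R} g - integral {0..s} g) / Z" for s
  have "(P has_real_derivative - ((exp (- s) + g s) / Z)) (at s within {0..})" if "0 \<le> s" for s
  proof -
    have "((\<lambda>u. integral {0..u} g) has_real_derivative g s) (at s within {0..s + 1})"
      using that by (intro integral_has_real_derivative continuous_on_subset[OF g(1)]) auto
    moreover have "at s within {0..s + 1} = at s within {0..}"
      by (rule at_within_nhd[of s "{..<s + 1}"]) auto
    ultimately have "((\<lambda>u. integral {0..u} g) has_real_derivative g s) (at s within {0..})"
      by simp
    then show ?thesis
      unfolding P_def using \<open>0 < Z\<close> by (auto intro!: derivative_eq_intros simp: diff_divide_distrib add_divide_distrib)
  qed
  moreover have "(P \<longlongrightarrow> 0) at_top"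
  proof (rule Lim_transform_eventually)
    show "((\<lambda>s. exp (- s) / Z) \<longlongrightarrow> 0) at_top"
      by (intro tendsto_divide_zero filterlim_compose[OF exp_at_bot filterlim_uminus_at_bot_at_top])
    have tail: "integral {0..s} g = integral {0..R} g" if "R \<le> s" for s
    proof -
      have "integral {R..s} g = 0"
        using g(3) by (subst integral_cong[where g = "\<lambda>_. 0"]) auto
      then show ?thesis
        using that \<open>0 \<le> R\<close> Henstock_Kurzweil_Integration.integral_combine[of 0 R s g]
        by (simp add: integrable_continuous_interval continuous_on_subset[OF g(1)])
    qed
    show "\<forall>\<^sub>F s in at_top. exp (- s) / Z = P s"
      using eventually_ge_at_top[of R] by eventually_elim (auto simp: P_def dest: tail)
  qed
  moreover have "P 0 = 1"
    using \<open>0 < Z\<close> by (simp add: P_def Z_def)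
  ultimately show "admissible_density (\<lambda>s. (exp (- s) + g s) / Z)"
    unfolding admissible_density_def using g(2) \<open>0 < Z\<close>
    by (intro exI[of _ P]) (simp add: add_pos_nonneg)
qed

lemma gbmM_uminus: "gbmM (\<lambda>s. - \<phi> s) t w = gbmM \<phi> t (- w)"
  by (simp add: gbmM_def fun_eq_iff)

lemma PhiFH_uminus: "PhiFH (\<lambda>s. - \<phi> s) \<rho> t w T = - PhiFH \<phi> \<rho> t (- w) T"
  by (simp add: PhiFH_def gbmM_uminus)

lemma risk_premium_uminus: "risk_premium (\<lambda>s. - \<phi> s) \<rho> t w T = risk_premium \<phi> \<rho> t (- w) T"
  by (simp add: risk_premium_def mpr_def bond_vol_def PhiFH_uminus algebra_simps)

lemma model_wd_uminus: "model_wd (\<lambda>s. - \<phi> s) \<rho> t w \<longleftrightarrow> model_wd \<phi> \<rho> t (- w)"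
proof -
  have neg: "(\<lambda>s. - \<phi> s * \<rho> s * gbmM (\<lambda>s. - \<phi> s) t w s)
      = (\<lambda>s. - 1 * (\<phi> s * \<rho> s * gbmM \<phi> t (- w) s))"
    by (simp add: gbmM_uminus)
  show ?thesis
    unfolding model_wd_def neg unfolding gbmM_uminus by (subst set_integrable_mult_right_iff) auto
qed

lemma risk_premium_neg_if_tail_average_exceeds:
  assumes wd: "model_wd \<phi> \<rho> t w" and "t < T"
    and cont: "continuous_on {t..} \<phi>" "continuous_on {t..} \<rho>" and \<rho>_pos: "\<And>s. t \<le> s \<Longrightarrow> 0 < \<rho> s"
    and below: "\<And>s. s \<in> {t..T} \<Longrightarrow> \<phi> s \<le> m"
    and tail: "m * model_mass \<phi> \<rho> t w {T..} < model_moment \<phi> \<rho> t w {T..}"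
    and pos: "0 < model_moment \<phi> \<rho> t w {t..}"
  shows "risk_premium \<phi> \<rho> t w T < 0"
proof -
  let ?D = "model_mass \<phi> \<rho> t w" and ?N = "model_moment \<phi> \<rho> t w"
  have weight_cont: "continuous_on S (\<lambda>s. \<rho> s * gbmM \<phi> t w s)" if "S \<subseteq> {t..}" for S
    using cont that by (intro continuous_intros) (auto elim: continuous_on_subset)
  have weight_pos: "0 < \<rho> s * gbmM \<phi> t w s" if "t \<le> s" for s
    using \<rho>_pos[OF that] by (simp add: gbmM_pos)
  note integrable = model_wd_integrable_on[OF wd]
  have "?N {t..T} \<le> integral {t..T} (\<lambda>s. m * (\<rho> s * gbmM \<phi> t w s))"
    unfolding model_moment_def using below weight_pos \<open>t < T\<close>
    by (intro integral_le integrable integrable_on_mult_right)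
      (auto simp: mult.assoc less_imp_le intro!: mult_right_mono)
  then have head: "?N {t..T} \<le> m * ?D {t..T}"
    by (simp add: model_mass_def)
  have "0 < ?D {t..T}"
    unfolding model_mass_def using \<open>t < T\<close> weight_pos
    by (intro integral_less_real[of t T "\<lambda>_. 0", simplified] weight_cont) auto
  moreover have "0 < ?D {T..}"
    unfolding model_mass_def using \<open>t < T\<close> weight_pos
    by (intro integral_atLeast_less[of "\<lambda>_. 0" _ _ T, simplified] integrable weight_cont)
      (auto intro: less_imp_le integrable_0)
  moreover have "?N {t..} = ?N {t..T} + ?N {T..}" "?D {t..} = ?D {t..T} + ?D {T..}"
    unfolding model_moment_def model_mass_def using \<open>t < T\<close>
    by (intro integral_atLeast_split integrable; simp)+
  ultimately have "PhiFH \<phi> \<rho> t w t < PhiFH \<phi> \<rho> t w T" and "0 < PhiFH \<phi> \<rho> t w t"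
    using mediant_less_right[of "?D {t..T}" "?D {T..}", OF _ _ head tail] pos
    by (simp_all add: PhiFH_eq_moment_div_mass)
  then show ?thesis
    by (simp add: risk_premium_def mpr_def bond_vol_def)
qed

lemma model_bump_tail_average_exceeds:
  fixes \<beta> :: "real \<Rightarrow> real"
  assumes wd: "model_wd \<phi> \<beta> t w" and cont: "continuous_on {t..} \<phi>" "continuous_on UNIV \<beta>"
    and \<beta>: "\<And>s. 0 \<le> \<beta> s" "0 < \<beta> b" and above: "\<And>s. 0 < \<beta> s \<Longrightarrow> m < \<phi> s"
    and "0 < m" "t \<le> T" "T \<le> b"
  shows "m * model_mass \<phi> \<beta> t w {T..} < model_moment \<phi> \<beta> t w {T..}"
    and "0 < model_moment \<phi> \<beta> t w {t..}"
proof -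
  let ?E = "gbmM \<phi> t w"
  have weighted_le: "m * (\<beta> s * ?E s) \<le> \<phi> s * \<beta> s * ?E s" for s
  proof (cases "\<beta> s = 0")
    case False
    then have "m < \<phi> s" "0 < \<beta> s * ?E s"
      using above[of s] \<beta>(1)[of s] gbmM_pos[of \<phi> t w s] by auto
    then show ?thesis
      using mult_right_mono[of m "\<phi> s" "\<beta> s * ?E s"] by (simp add: mult.assoc)
  qed simp
  have weighted_less: "m * (\<beta> b * ?E b) < \<phi> b * \<beta> b * ?E b"
    using above[OF \<beta>(2)] \<beta>(2) gbmM_pos[of \<phi> t w b] by (simp add: mult.assoc)
  have cont_weight: "continuous_on {x..} (\<lambda>s. \<phi> s * \<beta> s * ?E s)"
    "continuous_on {x..} (\<lambda>s. m * (\<beta> s * ?E s))" if "t \<le> x" for x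
    using that cont by (auto intro!: continuous_intros elim: continuous_on_subset)
  have integrable: "(\<lambda>s. \<phi> s * \<beta> s * ?E s) integrable_on {x..}"
    "(\<lambda>s. m * (\<beta> s * ?E s)) integrable_on {x..}" if "t \<le> x" for x
    using that by (auto intro!: model_wd_integrable_on[OF wd] integrable_on_mult_right)
  show "m * model_mass \<phi> \<beta> t w {T..} < model_moment \<phi> \<beta> t w {T..}"
    unfolding model_mass_def model_moment_def integral_mult_right[symmetric]
    using \<open>t \<le> T\<close> \<open>T \<le> b\<close> weighted_le weighted_less
    by (intro integral_atLeast_less integrable cont_weight) auto
  have "0 \<le> m * (\<beta> s * ?E s)" for s
    using \<open>0 < m\<close> \<beta>(1)[of s] gbmM_pos[of \<phi> t w s] by simp
  then have "0 \<le> \<phi> s * \<beta> s * ?E s" "0 < \<phi> b * \<beta> b * ?E b" for s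
    using weighted_le[of s] weighted_less order_trans le_less_trans by blast+
  then show "0 < model_moment \<phi> \<beta> t w {t..}"
    unfolding model_moment_def using \<open>t \<le> T\<close> \<open>T \<le> b\<close>
    by (intro integral_atLeast_less[where f = "\<lambda>_. 0" and b = b, simplified]
        integrable cont_weight integrable_0) auto
qed

lemma model_admixture_tail_average_exceeds:
  fixes \<rho>\<^sub>1 \<rho>\<^sub>2 :: "real \<Rightarrow> real"
  assumes wd: "model_wd \<phi> \<rho>\<^sub>1 t w" "model_wd \<phi> \<rho>\<^sub>2 t w" and "t \<le> T"
    and tail: "m * model_mass \<phi> \<rho>\<^sub>2 t w {T..} < model_moment \<phi> \<rho>\<^sub>2 t w {T..}"
    and pos: "0 < model_moment \<phi> \<rho>\<^sub>2 t w {t..}"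
  obtains c where "0 \<le> c"
    and "\<And>Z. 0 < Z \<Longrightarrow> m * model_mass \<phi> (\<lambda>s. (\<rho>\<^sub>1 s + c * \<rho>\<^sub>2 s) / Z) t w {T..}
                         < model_moment \<phi> (\<lambda>s. (\<rho>\<^sub>1 s + c * \<rho>\<^sub>2 s) / Z) t w {T..}"
    and "\<And>Z. 0 < Z \<Longrightarrow> 0 < model_moment \<phi> (\<lambda>s. (\<rho>\<^sub>1 s + c * \<rho>\<^sub>2 s) / Z) t w {t..}"
proof -
  define \<alpha> where "\<alpha> = model_moment \<phi> \<rho>\<^sub>1 t w {T..} - m * model_mass \<phi> \<rho>\<^sub>1 t w {T..}"
  define K where "K = model_moment \<phi> \<rho>\<^sub>2 t w {T..} - m * model_mass \<phi> \<rho>\<^sub>2 t w {T..}"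
  define \<gamma> where "\<gamma> = model_moment \<phi> \<rho>\<^sub>1 t w {t..}"
  define L where "L = model_moment \<phi> \<rho>\<^sub>2 t w {t..}"
  define c where "c = max ((\<bar>\<alpha>\<bar> + 1) / K) ((\<bar>\<gamma>\<bar> + 1) / L)"
  have "0 < K" "0 < L"
    using tail pos by (simp_all add: K_def L_def)
  moreover have "(\<bar>\<alpha>\<bar> + 1) / K \<le> c" "(\<bar>\<gamma>\<bar> + 1) / L \<le> c"
    by (simp_all add: c_def)
  ultimately have "\<bar>\<alpha>\<bar> + 1 \<le> c * K" "\<bar>\<gamma>\<bar> + 1 \<le> c * L"
    by (simp_all add: pos_divide_le_eq mult.commute)
  show thesis
  proof (rule that)
    show "0 \<le> c"
      using \<open>0 < K\<close> by (simp add: c_def le_max_iff_disj)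
    fix Z :: real
    assume "0 < Z"
    note mass = model_mass_lincomb[OF wd, where c = c and Z = Z]
      and moment = model_moment_lincomb[OF wd, where c = c and Z = Z]
    have "m * (model_mass \<phi> \<rho>\<^sub>1 t w {T..} + c * model_mass \<phi> \<rho>\<^sub>2 t w {T..})
        < model_moment \<phi> \<rho>\<^sub>1 t w {T..} + c * model_moment \<phi> \<rho>\<^sub>2 t w {T..}"
      using \<open>\<bar>\<alpha>\<bar> + 1 \<le> c * K\<close> abs_ge_minus_self[of \<alpha>] by (simp add: \<alpha>_def K_def algebra_simps)
    then show "m * model_mass \<phi> (\<lambda>s. (\<rho>\<^sub>1 s + c * \<rho>\<^sub>2 s) / Z) t w {T..}
        < model_moment \<phi> (\<lambda>s. (\<rho>\<^sub>1 s + c * \<rho>\<^sub>2 s) / Z) t w {T..}"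
      using \<open>0 < Z\<close> \<open>t \<le> T\<close> by (simp add: mass moment divide_strict_right_mono)
    have "0 < \<gamma> + c * L"
      using \<open>\<bar>\<gamma>\<bar> + 1 \<le> c * L\<close> abs_ge_minus_self[of \<gamma>] by linarith
    then show "0 < model_moment \<phi> (\<lambda>s. (\<rho>\<^sub>1 s + c * \<rho>\<^sub>2 s) / Z) t w {t..}"
      using \<open>0 < Z\<close> by (simp add: moment \<gamma>_def L_def)
  qed
qed

definition positive_risk_premia :: "(real \<Rightarrow> real) \<Rightarrow> bool" where
  "positive_risk_premia \<phi> \<longleftrightarrow>
     (\<forall>\<rho> t T w. admissible_density \<rho> \<longrightarrow> 0 \<le> t \<longrightarrow> t < T \<longrightarrow> model_wd \<phi> \<rho> t w \<longrightarrow>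
        0 < risk_premium \<phi> \<rho> t w T)"

lemma positive_risk_premiaD:
  "positive_risk_premia \<phi> \<Longrightarrow> admissible_density \<rho> \<Longrightarrow> 0 \<le> t \<Longrightarrow> t < T \<Longrightarrow> model_wd \<phi> \<rho> t w \<Longrightarrow>
    0 < risk_premium \<phi> \<rho> t w T"
  by (simp add: positive_risk_premia_def)

lemma positive_risk_premia_uminus:
  assumes "positive_risk_premia \<phi>"
  shows "positive_risk_premia (\<lambda>s. - \<phi> s)"
  using assms unfolding positive_risk_premia_def risk_premium_uminus model_wd_uminus by blast

lemma positive_risk_premia_bound_propagates:
  fixes \<phi> :: "real \<Rightarrow> real"
  assumes cont: "continuous_on {0..} \<phi>" and prp: "positive_risk_premia \<phi>"
    and "0 < a" "a < T" "T < b" "0 < m" and below: "\<And>s. s \<in> {a..T} \<Longrightarrow> \<phi> s \<le> m"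
  shows "\<phi> b \<le> m"
proof (rule ccontr)
  assume "\<not> \<phi> b \<le> m"
  then have "0 < b" "m < \<phi> b"
    using \<open>0 < a\<close> \<open>a < T\<close> \<open>T < b\<close> by linarith+
  then obtain \<beta> :: "real \<Rightarrow> real" and R :: real where \<beta>: "continuous_on UNIV \<beta>" "\<And>s. 0 \<le> \<beta> s"
    "\<And>s. \<beta> s \<le> exp R * exp (- s)" "0 < \<beta> b" "b < R" "\<And>s. R \<le> s \<Longrightarrow> \<beta> s = 0"
    and above: "\<And>s. 0 < \<beta> s \<Longrightarrow> m < \<phi> s"
    by (rule bump_in_superlevel_set[OF cont]) blast
  have cont_a: "continuous_on {a..} \<phi>"
    using cont by (rule continuous_on_subset) (use \<open>0 < a\<close> in auto)
  have wd_exp: "model_wd \<phi> (\<lambda>s. exp (- s)) a 0"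
    using \<open>0 < a\<close> cont_a by (intro model_wd_state_zero_exp_bound[where C = 1] continuous_intros) auto
  have wd_\<beta>: "model_wd \<phi> \<beta> a 0"
    using \<open>0 < a\<close> cont_a \<beta>(2,3)
    by (intro model_wd_state_zero_exp_bound[where C = "exp R"] continuous_on_subset[OF \<beta>(1)]) auto
  have "m * model_mass \<phi> \<beta> a 0 {T..} < model_moment \<phi> \<beta> a 0 {T..}"
    and "0 < model_moment \<phi> \<beta> a 0 {a..}"
    using model_bump_tail_average_exceeds[OF wd_\<beta> cont_a \<beta>(1,2,4) above \<open>0 < m\<close>, where T = T]
      \<open>a < T\<close> \<open>T < b\<close> by simp_all
  then obtain c where "0 \<le> c" and mixed:
    "\<And>Z. 0 < Z \<Longrightarrow> m * model_mass \<phi> (\<lambda>s. (exp (- s) + c * \<beta> s) / Z) a 0 {T..}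
                   < model_moment \<phi> (\<lambda>s. (exp (- s) + c * \<beta> s) / Z) a 0 {T..}"
    "\<And>Z. 0 < Z \<Longrightarrow> 0 < model_moment \<phi> (\<lambda>s. (exp (- s) + c * \<beta> s) / Z) a 0 {a..}"
    using model_admixture_tail_average_exceeds[OF wd_exp wd_\<beta> less_imp_le[OF \<open>a < T\<close>]] by blast
  define Z where "Z = 1 + integral {0..R} (\<lambda>s. c * \<beta> s)"
  define \<rho> where "\<rho> = (\<lambda>s. (exp (- s) + c * \<beta> s) / Z)"
  have "0 < Z" and "admissible_density \<rho>"
    unfolding \<rho>_def Z_def using \<beta>(1,2,5,6) \<open>0 \<le> c\<close> \<open>0 < b\<close>
    by (intro admissible_density_exp_plus_bump continuous_intros; simp)+
  moreover have wd_\<rho>: "model_wd \<phi> \<rho> a 0"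
    unfolding \<rho>_def using wd_exp wd_\<beta> by (rule model_wd_lincomb)
  moreover have "risk_premium \<phi> \<rho> a 0 T < 0"
  proof (rule risk_premium_neg_if_tail_average_exceeds[OF wd_\<rho> \<open>a < T\<close> cont_a _ _ below])
    show "continuous_on {a..} \<rho>"
      unfolding \<rho>_def using \<open>0 < Z\<close> by (intro continuous_intros continuous_on_subset[OF \<beta>(1)]) auto
    show "0 < \<rho> s" for s
      unfolding \<rho>_def using \<beta>(2)[of s] \<open>0 \<le> c\<close> \<open>0 < Z\<close> by (simp add: add_pos_nonneg)
  qed (use mixed[OF \<open>0 < Z\<close>] in \<open>simp_all add: \<rho>_def\<close>)
  ultimately show False
    using positive_risk_premiaD[OF prp _ _ \<open>a < T\<close>] \<open>0 < a\<close> by fastforce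
qed

lemma positive_risk_premia_le_max_zero:
  fixes \<phi> :: "real \<Rightarrow> real"
  assumes cont: "continuous_on {0..} \<phi>" and prp: "positive_risk_premia \<phi>"
    and "0 \<le> s" "s \<le> b"
  shows "\<phi> b \<le> max 0 (\<phi> s)"
proof (rule ccontr)
  assume "\<not> \<phi> b \<le> max 0 (\<phi> s)"
  define m where "m = (max 0 (\<phi> s) + \<phi> b) / 2"
  have m: "0 < m" "\<phi> s < m" "m < \<phi> b"
    using \<open>\<not> \<phi> b \<le> max 0 (\<phi> s)\<close> by (auto simp: m_def)
  then have "s < b"
    using \<open>s \<le> b\<close> by (cases "s = b") auto
  obtain \<delta> where "0 < \<delta>" and \<delta>: "\<And>x. x \<in> {0..} \<Longrightarrow> dist x s < \<delta> \<Longrightarrow> dist (\<phi> x) (\<phi> s) < m - \<phi> s"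
    using cont \<open>0 \<le> s\<close> m(2) unfolding continuous_on_iff by (metis atLeast_iff diff_gt_0_iff_gt)
  define d where "d = min \<delta> (b - s) / 2"
  have "0 < d" "d < \<delta>" "s + d < b"
    using \<open>0 < \<delta>\<close> \<open>s < b\<close> by (auto simp: d_def min_def field_simps)
  have below: "\<phi> x \<le> m" if "x \<in> {s + d / 2..s + d}" for x
  proof -
    have "x \<in> {0..}" "dist x s < \<delta>"
      using that \<open>0 \<le> s\<close> \<open>0 < d\<close> \<open>d < \<delta>\<close> by (auto simp: dist_real_def)
    then show ?thesis
      using \<delta> by (force simp: dist_real_def)
  qed
  have "\<phi> b \<le> m"
    by (rule positive_risk_premia_bound_propagates[OF cont prp _ _ \<open>s + d < b\<close> m(1) below])
      (use \<open>0 \<le> s\<close> \<open>0 < d\<close> in auto)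
  with m(3) show False
    by simp
qed

corollary positive_risk_premia_ge_min_zero:
  fixes \<phi> :: "real \<Rightarrow> real"
  assumes "continuous_on {0..} \<phi>" "positive_risk_premia \<phi>" "0 \<le> s" "s \<le> b"
  shows "min 0 (\<phi> s) \<le> \<phi> b"
  using positive_risk_premia_le_max_zero[of "\<lambda>s. - \<phi> s", OF _ positive_risk_premia_uminus] assms
  by (force intro: continuous_intros)

lemma positive_risk_premia_not_eventually_zero:
  assumes prp: "positive_risk_premia \<phi>" and "0 \<le> x" and zero: "\<And>s. x \<le> s \<Longrightarrow> \<phi> s = 0"
  shows False
proof -
  define a where "a = x + 1"
  have adm: "admissible_density (\<lambda>s. exp (- s))"
    using admissible_density_exp_plus_bump(2)[of "\<lambda>_. 0" 0] by simp
  have "continuous_on {a..} \<phi>"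
    using zero by (subst continuous_on_cong[where g = "\<lambda>_. 0"]) (auto simp: a_def)
  then have wd: "model_wd \<phi> (\<lambda>s. exp (- s)) a 0"
    using \<open>0 \<le> x\<close> by (intro model_wd_state_zero_exp_bound[where C = 1] continuous_intros) (auto simp: a_def)
  have "integral {a..} (\<lambda>s. \<phi> s * exp (- s) * gbmM \<phi> a 0 s) = 0"
    using zero by (subst integral_cong[where g = "\<lambda>_. 0"]) (auto simp: a_def)
  then have "risk_premium \<phi> (\<lambda>s. exp (- s)) a 0 (a + 1) = 0"
    by (simp add: risk_premium_def mpr_def PhiFH_def)
  moreover have "0 < risk_premium \<phi> (\<lambda>s. exp (- s)) a 0 (a + 1)"
    by (rule positive_risk_premiaD[OF prp adm _ _ wd]) (use \<open>0 \<le> x\<close> in \<open>simp_all add: a_def\<close>)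
  ultimately show False
    by simp
qed

lemma positive_risk_premia_neq_zero:
  fixes \<phi> :: "real \<Rightarrow> real"
  assumes cont: "continuous_on {0..} \<phi>" and prp: "positive_risk_premia \<phi>" and "0 \<le> x"
  shows "\<phi> x \<noteq> 0"
proof
  assume "\<phi> x = 0"
  then have "\<phi> s = 0" if "x \<le> s" for s
    using positive_risk_premia_le_max_zero[OF cont prp \<open>0 \<le> x\<close> that]
      positive_risk_premia_ge_min_zero[OF cont prp \<open>0 \<le> x\<close> that] by simp
  then show False
    by (rule positive_risk_premia_not_eventually_zero[OF prp \<open>0 \<le> x\<close>])
qed

theorem proposition3:
  fixes \<phi> :: "real \<Rightarrow> real"
  assumes cont: "continuous_on {0..} \<phi>"
    and prem: "\<And>\<rho> t T w. admissible_density \<rho> \<Longrightarrow> 0 \<le> t \<Longrightarrow> t < T \<Longrightarrow>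
                 model_wd \<phi> \<rho> t w \<Longrightarrow> risk_premium \<phi> \<rho> t w T > 0"
  shows "((\<forall>t\<ge>0. \<phi> t > 0) \<and> (\<forall>s t. 0 \<le> s \<longrightarrow> s \<le> t \<longrightarrow> \<phi> t \<le> \<phi> s))
       \<or> ((\<forall>t\<ge>0. \<phi> t < 0) \<and> (\<forall>s t. 0 \<le> s \<longrightarrow> s \<le> t \<longrightarrow> \<phi> s \<le> \<phi> t))"
proof -
  have prp: "positive_risk_premia \<phi>"
    using prem unfolding positive_risk_premia_def by blast
  have "(\<forall>t\<in>{0..}. 0 < \<phi> t) \<or> (\<forall>t\<in>{0..}. \<phi> t < 0)"
    using positive_risk_premia_neq_zero[OF cont prp]
    by (intro continuous_on_nonvanishing_sign[OF _ cont]) auto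
  moreover have "\<phi> t \<le> max 0 (\<phi> s)" "min 0 (\<phi> s) \<le> \<phi> t" if "0 \<le> s" "s \<le> t" for s t
    using positive_risk_premia_le_max_zero[OF cont prp that]
      positive_risk_premia_ge_min_zero[OF cont prp that] by auto
  ultimately show ?thesis
    by (smt (verit) atLeast_iff)
qed

end
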